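(* Let $F$ be a field of characteristic $0$, $V$ an $n$-dimensional $F$-vector space, $G\le\mathrm{GL}(V)$ a finite group generated by pseudo-reflections, and $M$ an $r$-dimensional $F[G]$-module. For all $1\le i,j\le r$ there is $L_{ij}\in\mathrm{S}(V)^G$ such that, as operators on $\mathrm{S}(V^* )\otimes\wedge M^*$, \[ d_i^*\delta_j^*+\delta_j^*d_i^*=\partial_{L_{ij}}. \]
   Context: $G$ acts contragrediently on $V^*,M^*$ and diagonally on tensor products of symmetric algebras $\mathrm{S}(\cdot)$ and exterior algebras $\wedge(\cdot)$. $(\mathrm{S}(V)\otimes M^* )^G$ is a free $\mathrm{S}(V)^G$-module with homogeneous basis $\tilde\omega_1^{M^*},\dots,\tilde\omega_r^{M^*}$, and $(\mathrm{S}(V)\otimes M)^G$ is a free $\mathrm{S}(V)^G$-module with homogeneous basis $\tilde\omega_1^{M},\dots,\tilde\omega_r^{M}$. For $s\in\mathrm{S}(V)$, $\partial_s$ is the constant-coefficient differential operator on $\mathrm{S}(V^* )$ ($\partial_v$ for $v\in V$ is the derivation with $\partial_v\lambda=\lambda(v)$ for $\lambda\in V^*$, extended multiplicatively in $s$), acting on $\mathrm{S}(V^* )\otimes\wedge M^*$ as $\partial_s\otimes\mathrm{id}$. For $\mu\in M^*$, $\epsilon_\mu$ is left exterior multiplication on $\wedge M^*$; for $m\in M$, $\iota_m$ is the interior product, the anti-derivation of $\wedge M^*$ with $\iota_m(\xi)=\xi(m)$ for $\xi\in M^*$. If $\tilde\omega_i^{M^*}=\sum_k s_k\otimes\mu_k$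 then $d_i^*=\sum_k\partial_{s_k}\otimes\epsilon_{\mu_k}$; if $\tilde\omega_j^{M}=\sum_k t_k\otimes m_k$ then $\delta_j^*=\sum_k\partial_{t_k}\otimes\iota_{m_k}$. *)

theory Defs
  imports Main "HOL-Library.Poly_Mapping"
begin

text \<open>V has basis e_k (k :: 'n, a finite type, n = CARD('n)), so
S(V) = F[e_k] and S(V^*) = F[e^*_k]; both are modelled by the polynomial ring
('n \<Rightarrow>0 nat) \<Rightarrow>0 'a. M has basis b_k (k :: 'm, r = CARD('m)), M^* has the dual
basis b^*_k. Elements of S(V) (x) M and S(V) (x) M^* are coefficient families
'm \<Rightarrow> poly; elements of S(V^*) (x) \<wedge>M^* are families 'm set \<Rightarrow> poly
(coefficient of b^*_{i1} \<and> ... \<and> b^*_{ip}, i1 < ... < ip).\<close>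

type_synonym ('n, 'a) spoly = "('n \<Rightarrow>\<^sub>0 nat) \<Rightarrow>\<^sub>0 'a"

definition const :: "'a::comm_ring_1 \<Rightarrow> ('n, 'a) spoly" where
  "const c = Poly_Mapping.single 0 c"

definition var :: "'n \<Rightarrow> ('n, 'a::comm_ring_1) spoly" where
  "var k = Poly_Mapping.single (Poly_Mapping.single k 1) 1"

text \<open>Matrices (linear maps w.r.t. the fixed bases): g i j = i-th coordinate of g(e_j).\<close>

definition mid :: "'n \<Rightarrow> 'n \<Rightarrow> 'a::comm_ring_1" where
  "mid i j = (if i = j then 1 else 0)"

definition mmult :: "('n \<Rightarrow> 'n \<Rightarrow> 'a::comm_ring_1) \<Rightarrow> ('n \<Rightarrow> 'n \<Rightarrow> 'a) \<Rightarrow> ('n::finite \<Rightarrow> 'n \<Rightarrow> 'a)" where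
  "mmult A B i j = (\<Sum>l\<in>UNIV. A i l * B l j)"

definition matrix_group :: "('n::finite \<Rightarrow> 'n \<Rightarrow> 'a::field) set \<Rightarrow> bool" where
  "matrix_group G \<longleftrightarrow> mid \<in> G \<and> (\<forall>g\<in>G. \<forall>h\<in>G. mmult g h \<in> G)
      \<and> (\<forall>g\<in>G. \<exists>h\<in>G. mmult g h = mid \<and> mmult h g = mid)"

definition ginv :: "('n::finite \<Rightarrow> 'n \<Rightarrow> 'a::field) set \<Rightarrow> ('n \<Rightarrow> 'n \<Rightarrow> 'a) \<Rightarrow> ('n \<Rightarrow> 'n \<Rightarrow> 'a)" where
  "ginv G g = (THE h. h \<in> G \<and> mmult g h = mid \<and> mmult h g = mid)"

text \<open>Pseudo-reflection: g - 1 has rank one, i.e. g = 1 + a \<phi>^T with a, \<phi> nonzero.\<close>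

definition pseudo_reflection :: "('n \<Rightarrow> 'n \<Rightarrow> 'a::field) \<Rightarrow> bool" where
  "pseudo_reflection g \<longleftrightarrow> (\<exists>a \<phi>. (\<exists>i. a i \<noteq> 0) \<and> (\<exists>j. \<phi> j \<noteq> 0) \<and> (\<forall>i j. g i j = mid i j + a i * \<phi> j))"

text \<open>Submonoid generated by a set (equals the generated subgroup for finite groups).\<close>

inductive_set generated :: "('n \<Rightarrow> 'n \<Rightarrow> 'a::comm_ring_1) set \<Rightarrow> ('n::finite \<Rightarrow> 'n \<Rightarrow> 'a) set"
  for R where
  gen_one: "mid \<in> generated R"
| gen_mult: "g \<in> R \<Longrightarrow> h \<in> generated R \<Longrightarrow> mmult g h \<in> generated R"

text \<open>Representation of G on M = F^r: rho g k l = k-th coordinate of g(b_l).\<close>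

definition representation :: "('n::finite \<Rightarrow> 'n \<Rightarrow> 'a::field) set \<Rightarrow> (('n \<Rightarrow> 'n \<Rightarrow> 'a) \<Rightarrow> ('m::finite \<Rightarrow> 'm \<Rightarrow> 'a)) \<Rightarrow> bool" where
  "representation G \<rho> \<longleftrightarrow> \<rho> mid = mid \<and> (\<forall>g\<in>G. \<forall>h\<in>G. \<rho> (mmult g h) = mmult (\<rho> g) (\<rho> h))"

definition actS :: "('n::finite \<Rightarrow> 'n \<Rightarrow> 'a::comm_ring_1) \<Rightarrow> ('n, 'a) spoly \<Rightarrow> ('n, 'a) spoly" where
  "actS g p = (\<Sum>u\<in>Poly_Mapping.keys p. const (Poly_Mapping.lookup p u) *
       (\<Prod>k\<in>UNIV. (\<Sum>l\<in>UNIV. const (g l k) * var l) ^ Poly_Mapping.lookup u k))"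

definition invariants :: "('n::finite \<Rightarrow> 'n \<Rightarrow> 'a::comm_ring_1) set \<Rightarrow> ('n, 'a) spoly set" where
  "invariants G = {p. \<forall>g\<in>G. actS g p = p}"

definition actSM :: "(('n \<Rightarrow> 'n \<Rightarrow> 'a) \<Rightarrow> ('m::finite \<Rightarrow> 'm \<Rightarrow> 'a)) \<Rightarrow> ('n::finite \<Rightarrow> 'n \<Rightarrow> 'a::field)
      \<Rightarrow> ('m \<Rightarrow> ('n, 'a) spoly) \<Rightarrow> ('m \<Rightarrow> ('n, 'a) spoly)" where
  "actSM \<rho> g t = (\<lambda>l. \<Sum>k\<in>UNIV. const (\<rho> g l k) * actS g (t k))"

text \<open>Diagonal action on S(V) (x) M^* (contragredient on M^*):
  g b^*_k = \<Sum>_l \<rho>(g^{-1}) k l b^*_l.\<close>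

definition actSMd :: "('n::finite \<Rightarrow> 'n \<Rightarrow> 'a::field) set \<Rightarrow> (('n \<Rightarrow> 'n \<Rightarrow> 'a) \<Rightarrow> ('m::finite \<Rightarrow> 'm \<Rightarrow> 'a))
      \<Rightarrow> ('n \<Rightarrow> 'n \<Rightarrow> 'a) \<Rightarrow> ('m \<Rightarrow> ('n, 'a) spoly) \<Rightarrow> ('m \<Rightarrow> ('n, 'a) spoly)" where
  "actSMd G \<rho> g s = (\<lambda>l. \<Sum>k\<in>UNIV. const (\<rho> (ginv G g) k l) * actS g (s k))"

definition homogeneous :: "('n::finite, 'a::comm_ring_1) spoly \<Rightarrow> nat \<Rightarrow> bool" where
  "homogeneous p d \<longleftrightarrow> (\<forall>u\<in>Poly_Mapping.keys p. (\<Sum>k\<in>UNIV. Poly_Mapping.lookup u k) = d)"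

definition homogeneous_basis :: "('n::finite, 'a::comm_ring_1) spoly set \<Rightarrow> ('m \<Rightarrow> ('n, 'a) spoly) set
     \<Rightarrow> ('m::finite \<Rightarrow> 'm \<Rightarrow> ('n, 'a) spoly) \<Rightarrow> bool" where
  "homogeneous_basis R X \<omega> \<longleftrightarrow>
     (\<forall>i. \<omega> i \<in> X) \<and> (\<forall>i. \<exists>d. \<forall>k. homogeneous (\<omega> i k) d) \<and>
     (\<forall>x\<in>X. \<exists>!c. (\<forall>i. c i \<in> R) \<and> x = (\<lambda>k. \<Sum>i\<in>UNIV. c i * \<omega> i k))"

text \<open>Constant-coefficient differential operators on S(V^*): \<partial>_{e_k} = d/d e^*_k, and
\<partial>_{e^u} applied to the monomial (e^*)^w gives \<Prod>_k w_k!/(w_k-u_k)! (e^*)^(w-u) if u \<le> w, else 0.\<close>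

definition dmono :: "('n::finite \<Rightarrow>\<^sub>0 nat) \<Rightarrow> ('n, 'a::field_char_0) spoly \<Rightarrow> ('n, 'a) spoly" where
  "dmono u p = (\<Sum>w\<in>Poly_Mapping.keys p.
      if (\<forall>k. Poly_Mapping.lookup u k \<le> Poly_Mapping.lookup w k)
      then Poly_Mapping.single (w - u) (Poly_Mapping.lookup p w *
             (\<Prod>k\<in>UNIV. of_nat (fact (Poly_Mapping.lookup w k)) /
                           of_nat (fact (Poly_Mapping.lookup w k - Poly_Mapping.lookup u k))))
      else 0)"

definition dop :: "('n::finite, 'a::field_char_0) spoly \<Rightarrow> ('n, 'a) spoly \<Rightarrow> ('n, 'a) spoly" where
  "dop s p = (\<Sum>u\<in>Poly_Mapping.keys s. const (Poly_Mapping.lookup s u) * dmono u p)"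

text \<open>Exterior algebra \<wedge>M^* with basis b^*_I, I \<subseteq> 'm (ordered increasingly).\<close>

definition esign :: "'m::{finite,linorder} \<Rightarrow> 'm set \<Rightarrow> ('n, 'a::comm_ring_1) spoly" where
  "esign k I = (- 1) ^ card {l\<in>I. l < k}"

text \<open>\<partial>_s (x) \<epsilon>_{b^*_k}, where \<epsilon>_{b^*_k} b^*_I = esign k I b^*_{I \<union> {k}} if k \<notin> I, else 0.\<close>

definition op_eps :: "('n::finite, 'a::field_char_0) spoly \<Rightarrow> 'm::{finite,linorder}
     \<Rightarrow> ('m set \<Rightarrow> ('n, 'a) spoly) \<Rightarrow> ('m set \<Rightarrow> ('n, 'a) spoly)" where
  "op_eps s k x = (\<lambda>J. if k \<in> J then esign k (J - {k}) * dop s (x (J - {k})) else 0)"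

text \<open>\<partial>_t (x) \<iota>_{b_k}, where \<iota>_{b_k} b^*_I = esign k I b^*_{I - {k}} if k \<in> I, else 0.\<close>

definition op_iota :: "('n::finite, 'a::field_char_0) spoly \<Rightarrow> 'm::{finite,linorder}
     \<Rightarrow> ('m set \<Rightarrow> ('n, 'a) spoly) \<Rightarrow> ('m set \<Rightarrow> ('n, 'a) spoly)" where
  "op_iota t k x = (\<lambda>J. if k \<notin> J then esign k J * dop t (x (insert k J)) else 0)"

text \<open>d_i^* = \<Sum>_k \<partial>_{s_k} (x) \<epsilon>_{b^*_k} for \<omega>_i^{M^*} = \<Sum>_k s_k (x) b^*_k;
      \<delta>_j^* = \<Sum>_k \<partial>_{t_k} (x) \<iota>_{b_k} for \<omega>_j^M = \<Sum>_k t_k (x) b_k.\<close>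

definition dstar :: "('m::{finite,linorder} \<Rightarrow> ('n::finite, 'a::field_char_0) spoly)
     \<Rightarrow> ('m set \<Rightarrow> ('n, 'a) spoly) \<Rightarrow> ('m set \<Rightarrow> ('n, 'a) spoly)" where
  "dstar s x = (\<lambda>J. \<Sum>k\<in>UNIV. op_eps (s k) k x J)"

definition deltastar :: "('m::{finite,linorder} \<Rightarrow> ('n::finite, 'a::field_char_0) spoly)
     \<Rightarrow> ('m set \<Rightarrow> ('n, 'a) spoly) \<Rightarrow> ('m set \<Rightarrow> ('n, 'a) spoly)" where
  "deltastar t x = (\<lambda>J. \<Sum>k\<in>UNIV. op_iota (t k) k x J)"

end

theory Submission
  imports Defs "HOL.Modules"
begin

(* Write \<omega>_i^{M^*} = \<Sum>_k s_k (x) b^*_k and \<omega>_j^M = \<Sum>_k t_k (x) b_k; then L_ij = \<Sum>_k s_k t_k.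
   L_ij is invariant because the coordinatewise pairing of S(V) (x) M^* with S(V) (x) M into S(V)
   is G-equivariant, G acting on M^* contragrediently. The operator identity rests on two facts:
   s \<mapsto> \<partial>_s is a ring homomorphism from S(V) into the (commutative) algebra of constant-coefficient
   operators, so \<partial>_s \<partial>_t = \<partial>_{st}; and on \<wedge>M^* the canonical anticommutation relation
   \<epsilon>_{b^*_k} \<iota>_{b_l} + \<iota>_{b_l} \<epsilon>_{b^*_k} = \<delta>_{kl} holds. *)

lemma poly_mapping_sum_single:
  "p = (\<Sum>w\<in>Poly_Mapping.keys p. Poly_Mapping.single w (Poly_Mapping.lookup p w))"
  by (rule poly_mapping_eqI)
     (auto simp: lookup_sum lookup_single when_def in_keys_iff sum.delta' intro: sym)

lemma additive_poly_mapping_eqI: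
  assumes "additive f" "additive g"
    and "\<And>w a. f (Poly_Mapping.single w a) = g (Poly_Mapping.single w a)"
  shows "f p = g p"
  using assms by (subst (1 2) poly_mapping_sum_single) (simp add: additive.sum)

lemma additive_sum_keys:
  assumes "\<And>w. F w 0 = 0" "\<And>w a b. F w (a + b) = F w a + F w b"
  shows "additive (\<lambda>p. \<Sum>w\<in>Poly_Mapping.keys p. F w (Poly_Mapping.lookup p w))"
  by unfold_locales (rule setsum_keys_plus_distrib; simp add: assms)

lemma const_add: "const (a + b) = (const a + const b :: ('n, 'a::comm_ring_1) spoly)"
  by (simp add: const_def single_add)

lemma const_mult: "const (a * b) = (const a * const b :: ('n, 'a::comm_ring_1) spoly)"
  by (simp add: const_def mult_single)

lemma const_0 [simp]: "const 0 = 0"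
  by (simp add: const_def)

lemma const_1 [simp]: "const 1 = 1"
  by (simp add: const_def)

lemma const_sum: "const (sum f A) = (\<Sum>a\<in>A. const (f a) :: ('n, 'a::comm_ring_1) spoly)"
  by (induction A rule: infinite_finite_induct) (auto simp: const_add)

lemma const_mult_single: "const c * Poly_Mapping.single w a = Poly_Mapping.single w (c * a)"
  by (simp add: const_def mult_single)

definition act_monomial :: "('n::finite \<Rightarrow> 'n \<Rightarrow> 'a::comm_ring_1) \<Rightarrow> ('n \<Rightarrow>\<^sub>0 nat) \<Rightarrow> ('n, 'a) spoly" where
  "act_monomial g u = (\<Prod>k\<in>UNIV. (\<Sum>l\<in>UNIV. const (g l k) * var l) ^ Poly_Mapping.lookup u k)"

lemma actS_eq: "actS g p = (\<Sum>u\<in>Poly_Mapping.keys p. const (Poly_Mapping.lookup p u) * act_monomial g u)"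
  by (simp add: actS_def act_monomial_def)

lemma additive_actS: "additive (actS g)"
  unfolding actS_eq by (rule additive_sum_keys) (auto simp: const_add distrib_right)

lemma actS_single: "actS g (Poly_Mapping.single w a) = const a * act_monomial g w"
  unfolding actS_eq by simp

lemma act_monomial_add: "act_monomial g (u + v) = act_monomial g u * act_monomial g v"
  by (simp add: act_monomial_def lookup_add power_add prod.distrib)

lemma actS_add: "actS g (p + q) = actS g p + actS g q"
  by (rule additive.add[OF additive_actS])

lemma actS_sum: "actS g (sum f A) = (\<Sum>a\<in>A. actS g (f a))"
  by (rule additive.sum[OF additive_actS])

lemma actS_mult: "actS g (p * q) = actS g p * actS g q"
proof (rule additive_poly_mapping_eqI[where f = "\<lambda>p. actS g (p * q)" and g = "\<lambda>p. actS g p * actS g q"])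
  fix w a
  show "actS g (Poly_Mapping.single w a * q) = actS g (Poly_Mapping.single w a) * actS g q"
  proof (rule additive_poly_mapping_eqI[where f = "\<lambda>q. actS g (Poly_Mapping.single w a * q)"
        and g = "\<lambda>q. actS g (Poly_Mapping.single w a) * actS g q"])
    show "actS g (Poly_Mapping.single w a * Poly_Mapping.single v b) =
          actS g (Poly_Mapping.single w a) * actS g (Poly_Mapping.single v b)" for v b
      by (simp add: mult_single actS_single act_monomial_add const_mult mult_ac)
  qed (unfold_locales; simp add: distrib_left actS_add)+
qed (unfold_locales; simp add: distrib_right actS_add)+

definition dmono_coeff :: "('n::finite \<Rightarrow>\<^sub>0 nat) \<Rightarrow> ('n \<Rightarrow>\<^sub>0 nat) \<Rightarrow> 'a::field_char_0" where
  "dmono_coeff w u = (\<Prod>k\<in>UNIV. of_nat (fact (Poly_Mapping.lookup w k)) /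
                           of_nat (fact (Poly_Mapping.lookup w k - Poly_Mapping.lookup u k)))"

lemma dmono_eq: "dmono u p = (\<Sum>w\<in>Poly_Mapping.keys p.
    if \<forall>k. Poly_Mapping.lookup u k \<le> Poly_Mapping.lookup w k
    then Poly_Mapping.single (w - u) (Poly_Mapping.lookup p w * dmono_coeff w u) else 0)"
  unfolding dmono_def dmono_coeff_def by simp

lemma additive_dmono: "additive (dmono u)"
  unfolding dmono_eq by (rule additive_sum_keys) (auto simp: distrib_right single_add)

lemma dmono_single: "dmono u (Poly_Mapping.single w a) =
   (if \<forall>k. Poly_Mapping.lookup u k \<le> Poly_Mapping.lookup w k
    then Poly_Mapping.single (w - u) (a * dmono_coeff w u) else 0)"
  unfolding dmono_eq by simp

lemma dmono_add: "dmono u (p + q) = dmono u p + dmono u q"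
  by (rule additive.add[OF additive_dmono])

lemma dmono_const_mult: "dmono u (const c * p) = const c * dmono u p"
  by (rule additive_poly_mapping_eqI[where f = "\<lambda>p. dmono u (const c * p)"])
     (unfold_locales; simp add: distrib_left dmono_add const_mult_single dmono_single mult.assoc)+

lemma dmono_coeff_add:
  assumes "\<forall>k. Poly_Mapping.lookup v k \<le> Poly_Mapping.lookup w k"
    and "\<forall>k. Poly_Mapping.lookup u k \<le> Poly_Mapping.lookup w k - Poly_Mapping.lookup v k"
  shows "(dmono_coeff w v * dmono_coeff (w - v) u :: 'a::field_char_0) = dmono_coeff w (u + v)"
  unfolding dmono_coeff_def prod.distrib[symmetric]
  using assms by (intro prod.cong) (auto simp: lookup_minus lookup_add diff_diff_add add.commute)

lemma dmono_dmono: "dmono u (dmono v p) = dmono (u + v) (p :: ('n::finite, 'a::field_char_0) spoly)"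
proof (rule additive_poly_mapping_eqI[where f = "\<lambda>p. dmono u (dmono v p)"])
  show "additive (\<lambda>p. dmono u (dmono v p))"
    by unfold_locales (simp add: dmono_add)
  show "additive (dmono (u + v))"
    by (rule additive_dmono)
  fix w and a :: 'a
  let ?le = "\<lambda>u w. \<forall>k. Poly_Mapping.lookup u k \<le> (Poly_Mapping.lookup w k :: nat)"
  show "dmono u (dmono v (Poly_Mapping.single w a)) = dmono (u + v) (Poly_Mapping.single w a)"
  proof (cases "?le v w")
    case True
    then have le_iff: "?le u (w - v) \<longleftrightarrow> ?le (u + v) w"
      by (auto simp: lookup_minus lookup_add) (metis le_diff_conv2)+
    show ?thesis
    proof (cases "?le (u + v) w")
      case True': True
      have "w - v - u = w - (u + v)"
        by (rule poly_mapping_eqI) (simp add: lookup_minus lookup_add)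
      moreover have "(dmono_coeff w v * dmono_coeff (w - v) u :: 'a) = dmono_coeff w (u + v)"
        using True True' le_iff by (intro dmono_coeff_add) (auto simp: lookup_minus)
      ultimately show ?thesis
        using True True' le_iff by (simp add: dmono_single mult.assoc)
    qed (use True le_iff in \<open>simp add: dmono_single additive.zero[OF additive_dmono] del: not_all\<close>)
  next
    case False
    then have "\<not> ?le (u + v) w"
      by (auto simp: lookup_add) (metis add_leE)
    with False show ?thesis
      by (simp add: dmono_single additive.zero[OF additive_dmono] del: not_all)
  qed
qed

lemma additive_dop_left: "additive (\<lambda>s. dop s p)"
  unfolding dop_def by (rule additive_sum_keys) (auto simp: distrib_right const_add)

lemma additive_dop: "additive (dop s)"
  by unfold_locales (simp add: dop_def distrib_left sum.distrib dmono_add)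

lemma dop_single: "dop (Poly_Mapping.single u a) p = const a * dmono u p"
  unfolding dop_def by simp

lemma dop_add_left: "dop (s + t) p = dop s p + dop t p"
  by (rule additive.add[OF additive_dop_left])

lemma dop_add: "dop s (p + q) = dop s p + dop s q"
  by (rule additive.add[OF additive_dop])

lemma dop_mult: "dop s (dop t p) = dop (s * t) p"
proof (rule additive_poly_mapping_eqI[where f = "\<lambda>s. dop s (dop t p)" and g = "\<lambda>s. dop (s * t) p"])
  fix u a
  show "dop (Poly_Mapping.single u a) (dop t p) = dop (Poly_Mapping.single u a * t) p"
  proof (rule additive_poly_mapping_eqI[where f = "\<lambda>t. dop (Poly_Mapping.single u a) (dop t p)"
        and g = "\<lambda>t. dop (Poly_Mapping.single u a * t) p"])
    show "dop (Poly_Mapping.single u a) (dop (Poly_Mapping.single v b) p) =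
          dop (Poly_Mapping.single u a * Poly_Mapping.single v b) p" for v b
      by (simp add: dop_single mult_single dmono_const_mult dmono_dmono const_mult mult_ac)
  qed (unfold_locales; simp add: distrib_left dop_add_left dop_add)+
qed (unfold_locales; simp add: distrib_right dop_add_left)+

lemma dop_neg_one_power_mult: "dop s ((- 1) ^ n * p) = (- 1) ^ n * dop s p"
  by (induction n) (simp_all add: additive.minus[OF additive_dop])

lemma dop_esign_mult: "dop s (esign k I * p) = esign k I * dop s p"
  unfolding esign_def by (rule dop_neg_one_power_mult)

lemma esign_square: "esign k I * esign k I = 1"
  by (simp add: esign_def flip: power_add)

lemma esign_insert:
  assumes "l \<notin> I"
  shows "esign k (insert l I) = (if l < k then - esign k I else esign k I)"
proof -
  have "{m \<in> insert l I. m < k} = (if l < k then insert l {m \<in> I. m < k} else {m \<in> I. m < k})"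
    by auto
  with assms show ?thesis
    by (simp add: esign_def)
qed

lemma esign_swap:
  assumes "k \<noteq> l" "k \<in> J" "l \<notin> J"
  shows "esign l J * esign k (insert l (J - {k})) =
           - (esign k (J - {k}) * esign l (J - {k}) :: ('n, 'a::comm_ring_1) spoly)"
proof -
  have l: "esign l J = (if k < l then - esign l (J - {k}) else esign l (J - {k}) :: ('n, 'a) spoly)"
    using esign_insert[of k "J - {k}" l] assms by (simp add: insert_absorb)
  have k: "esign k (insert l (J - {k})) = (if l < k then - esign k (J - {k}) else esign k (J - {k}) :: ('n, 'a) spoly)"
    using esign_insert[of l "J - {k}" k] assms by simp
  show ?thesis
    using assms unfolding l k by (cases "k < l") (auto simp: mult.commute)
qed

lemma op_eps_op_iota_anticommutator:
  "op_eps s k (op_iota t l x) J + op_iota t l (op_eps s k x) J =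
     (if k = l then dop s (dop t (x J)) else 0)"
proof -
  note zero = additive.zero[OF additive_dop]
  consider "k = l" | "k \<noteq> l" "k \<in> J" "l \<notin> J" | "k \<noteq> l" "k \<notin> J \<or> l \<in> J"
    by blast
  then show ?thesis
  proof cases
    case 1
    then show ?thesis
      by (cases "k \<in> J") (auto simp: op_eps_def op_iota_def dop_esign_mult zero esign_square
          insert_absorb dop_mult mult.assoc[symmetric] mult.commute[of t])
  next
    case 2
    then have "insert l J - {k} = insert l (J - {k})"
      by auto
    with 2 show ?thesis
      by (simp add: op_eps_def op_iota_def dop_esign_mult dop_mult mult.commute[of t] esign_swap mult.assoc[symmetric])
  next
    case 3
    then show ?thesis
      by (auto simp: op_eps_def op_iota_def zero)
  qed
qed

lemma op_eps_sum:
  "op_eps s k (\<lambda>Y. \<Sum>l\<in>A. f l Y) J = (\<Sum>l\<in>A. op_eps s k (f l) J)"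
  by (simp add: op_eps_def additive.sum[OF additive_dop] sum_distrib_left)

lemma op_iota_sum:
  "op_iota t l (\<lambda>Y. \<Sum>k\<in>A. f k Y) J = (\<Sum>k\<in>A. op_iota t l (f k) J)"
  by (simp add: op_iota_def additive.sum[OF additive_dop] sum_distrib_left)

lemma dstar_deltastar_anticommutator:
  "dstar s (deltastar t x) J + deltastar t (dstar s x) J = dop (\<Sum>k\<in>UNIV. s k * t k) (x J)"
proof -
  have "dstar s (deltastar t x) J = (\<Sum>k\<in>UNIV. \<Sum>l\<in>UNIV. op_eps (s k) k (op_iota (t l) l x) J)"
    by (simp add: dstar_def deltastar_def op_eps_sum)
  moreover have "deltastar t (dstar s x) J = (\<Sum>k\<in>UNIV. \<Sum>l\<in>UNIV. op_iota (t l) l (op_eps (s k) k x) J)"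
    by (simp add: dstar_def deltastar_def op_iota_sum) (rule sum.swap)
  ultimately have "dstar s (deltastar t x) J + deltastar t (dstar s x) J =
      (\<Sum>k\<in>UNIV. \<Sum>l\<in>UNIV. op_eps (s k) k (op_iota (t l) l x) J + op_iota (t l) l (op_eps (s k) k x) J)"
    by (simp add: sum.distrib)
  also have "\<dots> = (\<Sum>k\<in>UNIV. dop (s k * t k) (x J))"
    by (simp add: op_eps_op_iota_anticommutator dop_mult)
  also have "\<dots> = dop (\<Sum>k\<in>UNIV. s k * t k) (x J)"
    by (rule additive.sum[OF additive_dop_left, symmetric])
  finally show ?thesis .
qed

lemma mmult_assoc: "mmult (mmult A B) C = mmult A (mmult B C)"
proof (intro ext)
  fix i j
  have "mmult (mmult A B) C i j = (\<Sum>l\<in>UNIV. \<Sum>m\<in>UNIV. A i m * B m l * C l j)"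
    by (simp add: mmult_def sum_distrib_right)
  also have "\<dots> = (\<Sum>m\<in>UNIV. \<Sum>l\<in>UNIV. A i m * B m l * C l j)"
    by (rule sum.swap)
  also have "\<dots> = mmult A (mmult B C) i j"
    by (simp add: mmult_def sum_distrib_left mult.assoc)
  finally show "mmult (mmult A B) C i j = mmult A (mmult B C) i j" .
qed

lemma mmult_mid_left [simp]: "mmult mid A = A"
  by (intro ext) (simp add: mmult_def mid_def if_distrib[of "\<lambda>x. x * _"] cong: if_cong)

lemma mmult_mid_right [simp]: "mmult A mid = A"
  by (intro ext) (simp add: mmult_def mid_def if_distrib[of "\<lambda>x. _ * x"] cong: if_cong)

lemma ginv_inverse:
  assumes "matrix_group G" "g \<in> G"
  shows "ginv G g \<in> G" "mmult g (ginv G g) = mid" "mmult (ginv G g) g = mid"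
proof -
  obtain h where h: "h \<in> G" "mmult g h = mid" "mmult h g = mid"
    using assms unfolding matrix_group_def by blast
  have "\<exists>!h. h \<in> G \<and> mmult g h = mid \<and> mmult h g = mid"
  proof (rule ex1I[of _ h])
    fix h' assume h': "h' \<in> G \<and> mmult g h' = mid \<and> mmult h' g = mid"
    have "h' = mmult h' (mmult g h)"
      using h by simp
    also have "\<dots> = mmult (mmult h' g) h"
      by (rule mmult_assoc[symmetric])
    finally show "h' = h"
      using h' by simp
  qed (use h in blast)
  then have "ginv G g \<in> G \<and> mmult g (ginv G g) = mid \<and> mmult (ginv G g) g = mid"
    unfolding ginv_def by (rule theI')
  then show "ginv G g \<in> G" "mmult g (ginv G g) = mid" "mmult (ginv G g) g = mid"
    by blast+
qed

lemma pairing_contragredient: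
  fixes S T s t :: "'m::finite \<Rightarrow> ('n, 'a::comm_ring_1) spoly" and A B :: "'m \<Rightarrow> 'm \<Rightarrow> 'a"
  assumes "\<And>l. s l = (\<Sum>k\<in>UNIV. const (A k l) * S k)"
    and "\<And>l. t l = (\<Sum>k\<in>UNIV. const (B l k) * T k)"
    and "mmult A B = mid"
  shows "(\<Sum>l\<in>UNIV. s l * t l) = (\<Sum>k\<in>UNIV. S k * T k)"
proof -
  have "(\<Sum>l\<in>UNIV. s l * t l) =
      (\<Sum>l\<in>UNIV. \<Sum>k\<in>UNIV. \<Sum>k'\<in>UNIV. const (A k l * B l k') * (S k * T k'))"
    by (simp add: assms(1,2) sum_product const_mult mult_ac)
  also have "\<dots> = (\<Sum>k\<in>UNIV. \<Sum>k'\<in>UNIV. \<Sum>l\<in>UNIV. const (A k l * B l k') * (S k * T k'))"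
    by (subst sum.swap) (rule sum.cong[OF refl], rule sum.swap)
  also have "\<dots> = (\<Sum>k\<in>UNIV. \<Sum>k'\<in>UNIV. const (mmult A B k k') * (S k * T k'))"
    by (simp add: mmult_def const_sum sum_distrib_right)
  also have "\<dots> = (\<Sum>k\<in>UNIV. S k * T k)"
    by (simp add: assms(3) mid_def if_distrib[of const] if_distrib[of "\<lambda>x. x * _"] cong: if_cong)
  finally show ?thesis .
qed

lemma pairing_in_invariants:
  assumes "matrix_group G" "representation G \<rho>"
    and "\<forall>g\<in>G. actSMd G \<rho> g s = s" "\<forall>g\<in>G. actSM \<rho> g t = t"
  shows "(\<Sum>k\<in>UNIV. s k * t k) \<in> invariants G"
  unfolding invariants_def
proof (intro CollectI ballI)
  fix g assume g: "g \<in> G"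
  have "\<rho> (mmult (ginv G g) g) = mmult (\<rho> (ginv G g)) (\<rho> g)"
    using assms(2) g ginv_inverse(1)[OF assms(1) g] unfolding representation_def by blast
  then have "mmult (\<rho> (ginv G g)) (\<rho> g) = \<rho> mid"
    using ginv_inverse(3)[OF assms(1) g] by simp
  also have "\<rho> mid = mid"
    using assms(2) unfolding representation_def by blast
  finally have inverse: "mmult (\<rho> (ginv G g)) (\<rho> g) = mid" .
  have "s l = (\<Sum>k\<in>UNIV. const (\<rho> (ginv G g) k l) * actS g (s k))" for l
    using fun_cong[OF bspec[OF assms(3) g], of l] unfolding actSMd_def by (rule sym)
  moreover have "t l = (\<Sum>k\<in>UNIV. const (\<rho> g l k) * actS g (t k))" for l
    using fun_cong[OF bspec[OF assms(4) g], of l] unfolding actSM_def by (rule sym)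
  ultimately have "(\<Sum>l\<in>UNIV. s l * t l) = (\<Sum>k\<in>UNIV. actS g (s k) * actS g (t k))"
    using inverse by (rule pairing_contragredient)
  also have "\<dots> = actS g (\<Sum>k\<in>UNIV. s k * t k)"
    by (simp only: actS_sum actS_mult)
  finally show "actS g (\<Sum>k\<in>UNIV. s k * t k) = (\<Sum>k\<in>UNIV. s k * t k)"
    by (rule sym)
qed

theorem lemma5p5:
  fixes G :: "('n::finite \<Rightarrow> 'n \<Rightarrow> 'a::field_char_0) set"
    and \<rho> :: "('n \<Rightarrow> 'n \<Rightarrow> 'a) \<Rightarrow> ('m::{finite,linorder} \<Rightarrow> 'm \<Rightarrow> 'a)"
    and \<omega>Md :: "'m \<Rightarrow> 'm \<Rightarrow> ('n, 'a) spoly"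
    and \<omega>M :: "'m \<Rightarrow> 'm \<Rightarrow> ('n, 'a) spoly"
  assumes "finite G"
    and "matrix_group G"
    and "G = generated {g\<in>G. pseudo_reflection g}"
    and "representation G \<rho>"
    and "homogeneous_basis (invariants G) {s. \<forall>g\<in>G. actSMd G \<rho> g s = s} \<omega>Md"
    and "homogeneous_basis (invariants G) {t. \<forall>g\<in>G. actSM \<rho> g t = t} \<omega>M"
  shows "\<forall>i j. \<exists>L\<in>invariants G. \<forall>x.
           (\<lambda>J. dstar (\<omega>Md i) (deltastar (\<omega>M j) x) J + deltastar (\<omega>M j) (dstar (\<omega>Md i) x) J)
           = (\<lambda>J. dop L (x J))"
proof (intro allI)
  fix i j
  have "\<forall>g\<in>G. actSMd G \<rho> g (\<omega>Md i) = \<omega>Md i"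
    using assms(5) unfolding homogeneous_basis_def by blast
  moreover have "\<forall>g\<in>G. actSM \<rho> g (\<omega>M j) = \<omega>M j"
    using assms(6) unfolding homogeneous_basis_def by blast
  ultimately have "(\<Sum>k\<in>UNIV. \<omega>Md i k * \<omega>M j k) \<in> invariants G"
    using assms(2,4) by (intro pairing_in_invariants)
  then show "\<exists>L\<in>invariants G. \<forall>x.
      (\<lambda>J. dstar (\<omega>Md i) (deltastar (\<omega>M j) x) J + deltastar (\<omega>M j) (dstar (\<omega>Md i) x) J)
      = (\<lambda>J. dop L (x J))"
    by (auto simp: dstar_deltastar_anticommutator)
qed

end
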